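(* Let $S$ be a finite set, let $\sigma\in\mathrm{Perm}(S)$, and let $\tau,\tau'\in\mathrm{Perm}(S)$ have disjoint supports. Then: (1) $(\sigma\setminus\tau)^{-1}=\sigma^{-1}\setminus\tau^{-1}$; (2) $(\sigma\setminus\tau)\setminus\tau'=\sigma\setminus(\tau\tau')=(\sigma\setminus\tau')\setminus\tau$; (3) two elements $(i,k),(i',k')\in\{0,1\}\times(S\setminus\mathrm{supp}(\tau))$ lie in the same cycle of $\tau'\tau\bowtie\sigma$ if and only if they lie in the same cycle of $\tau'\bowtie(\sigma\setminus\tau)$ (where $\tau'$ is regarded as a permutation of $S\setminus\mathrm{supp}(\tau)$, which it preserves).
   Context: $\mathrm{Perm}(S)$ denotes permutations of $S$ and $\mathrm{supp}(\sigma)=\{k:\sigma(k)\neq k\}$. For $\sigma,\tau\in\mathrm{Perm}(S)$, $\sigma\setminus\tau\in\mathrm{Perm}(S\setminus\mathrm{supp}(\tau))$ is defined by $(\sigma\setminus\tau)(k)=(\tau\sigma)^{r(k)}(k)$, where $r(k)\ge1$ is the smallest integer with $(\tau\sigma)^{r(k)}(k)\notin\mathrm{supp}(\tau)$. For $\pi,\sigma\in\mathrm{Perm}(S)$, $\pi\bowtie\sigma\in\mathrm{Perm}(\{0,1\}\times S)$ is given by $(0,k)\mapsto(1,\sigma(k))$ and $(1,k)\mapsto(0,\pi(k))$. *)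

theory Defs
  imports "HOL-Combinatorics.Permutations"
begin

definition supp :: "('a \<Rightarrow> 'a) \<Rightarrow> 'a set" where
  "supp \<sigma> = {k. \<sigma> k \<noteq> k}"

text \<open>sigma minus tau, a permutation of S - supp tau, extended by the identity
  (on supp tau and outside S).  Composition tau sigma means tau after sigma.\<close>
definition perm_minus :: "('a \<Rightarrow> 'a) \<Rightarrow> ('a \<Rightarrow> 'a) \<Rightarrow> ('a \<Rightarrow> 'a)" where
  "perm_minus \<sigma> \<tau> k =
     (if k \<in> supp \<tau> then k
      else ((\<tau> \<circ> \<sigma>) ^^ (LEAST r. r \<ge> 1 \<and> ((\<tau> \<circ> \<sigma>) ^^ r) k \<notin> supp \<tau>)) k)"

text \<open>pi bowtie sigma on {0,1} x S, with 0 encoded as False and 1 as True: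
  (0,k) -> (1, sigma k), (1,k) -> (0, pi k).\<close>
definition bowtie :: "('a \<Rightarrow> 'a) \<Rightarrow> ('a \<Rightarrow> 'a) \<Rightarrow> (bool \<times> 'a \<Rightarrow> bool \<times> 'a)" where
  "bowtie \<pi> \<sigma> = (\<lambda>(i, k). if i then (False, \<pi> k) else (True, \<sigma> k))"

definition same_cycle :: "('b \<Rightarrow> 'b) \<Rightarrow> 'b \<Rightarrow> 'b \<Rightarrow> bool" where
  "same_cycle f x y \<longleftrightarrow> (\<exists>n. (f ^^ n) x = y)"

end

theory Submission
  imports Defs "HOL-Combinatorics.Cycles"
begin

(* sigma \ tau is the first-return map of tau sigma to the complement of supp tau.  All three
   claims are properties of first-return (induced) maps of permutations: inducing commutes with
   inversion and with conjugation by a map fixing the target set, inducing on A and then on B is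
   inducing on A \<inter> B, and two points of A share a cycle of h iff they share a cycle of the induced
   map.  For (3), the first return of tau' tau \<bowtie> sigma to {0,1} \<times> (S - supp tau) is
   exactly tau' \<bowtie> (sigma \ tau). *)

(* If the orbit of x never returns to A, LEAST yields an unspecified exponent; for permutations
   every orbit returns. *)
definition induced_map :: "('a \<Rightarrow> 'a) \<Rightarrow> 'a set \<Rightarrow> 'a \<Rightarrow> 'a" where
  "induced_map h A x = (if x \<in> A then (h ^^ (LEAST r. r \<ge> 1 \<and> (h ^^ r) x \<in> A)) x else x)"

lemma induced_map_outside [simp]: "x \<notin> A \<Longrightarrow> induced_map h A x = x"
  by (simp add: induced_map_def)

lemma induced_map_eqI:
  assumes "x \<in> A" "r \<ge> 1" "(h ^^ r) x \<in> A" "\<And>j. 0 < j \<Longrightarrow> j < r \<Longrightarrow> (h ^^ j) x \<notin> A"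
  shows "induced_map h A x = (h ^^ r) x"
proof -
  have "(LEAST r. r \<ge> 1 \<and> (h ^^ r) x \<in> A) = r"
    by (rule Least_equality) (use assms in \<open>auto simp: not_le intro: ccontr\<close>)
  with assms(1) show ?thesis
    by (simp add: induced_map_def)
qed

lemma induced_map_returnE:
  assumes "x \<in> A" "n \<ge> 1" "(h ^^ n) x \<in> A"
  obtains r where "r \<ge> 1" "r \<le> n" "(h ^^ r) x \<in> A" "\<And>j. 0 < j \<Longrightarrow> j < r \<Longrightarrow> (h ^^ j) x \<notin> A"
    "induced_map h A x = (h ^^ r) x"
proof -
  let ?r = "LEAST r. r \<ge> 1 \<and> (h ^^ r) x \<in> A"
  have returns: "?r \<ge> 1 \<and> (h ^^ ?r) x \<in> A"
    by (rule LeastI[of _ n]) (use assms in auto)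
  have bound: "?r \<le> n"
    by (rule Least_le) (use assms in auto)
  have minimal: "(h ^^ j) x \<notin> A" if "0 < j" "j < ?r" for j
    using not_less_Least[OF that(2)] that(1) by auto
  show ?thesis
    by (rule that[of ?r]) (use returns bound minimal assms(1) in \<open>auto simp: induced_map_def\<close>)
qed

lemma permutation_induced_map_returnE:
  assumes "permutation h" "x \<in> A"
  obtains r where "r \<ge> 1" "(h ^^ r) x \<in> A" "\<And>j. 0 < j \<Longrightarrow> j < r \<Longrightarrow> (h ^^ j) x \<notin> A"
    "induced_map h A x = (h ^^ r) x"
proof -
  obtain n where "h ^^ n = id" "n > 0"
    using permutation_is_nilpotent[OF assms(1)] .
  with assms(2) show ?thesis
    using induced_map_returnE[of x A n h] that by auto
qed

lemma induced_map_in: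
  assumes "permutation h" "x \<in> A"
  shows "induced_map h A x \<in> A"
  using permutation_induced_map_returnE[OF assms] by metis

lemma funpow_induced_map_eq_funpow: "\<exists>N. (induced_map h A ^^ m) x = (h ^^ N) x"
proof (induction m arbitrary: x)
  case 0
  show ?case
    by (metis funpow_0)
next
  case (Suc m)
  obtain r where "induced_map h A x = (h ^^ r) x"
    by (metis induced_map_def funpow_0)
  moreover obtain N where "(induced_map h A ^^ m) (induced_map h A x) = (h ^^ N) (induced_map h A x)"
    using Suc.IH by blast
  ultimately show ?case
    by (metis funpow_Suc_right funpow_add o_apply)
qed

lemma funpow_to_funpow_induced_map:
  assumes "x \<in> A" "y \<in> A" "(h ^^ n) x = y"
  shows "\<exists>m. (induced_map h A ^^ m) x = y"
  using assms(1,3)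
proof (induction n arbitrary: x rule: less_induct)
  case (less n)
  show ?case
  proof (cases "n = 0")
    case True
    with less.prems show ?thesis
      by (metis funpow_0)
  next
    case False
    then obtain r where r: "r \<ge> 1" "r \<le> n" "(h ^^ r) x \<in> A" "induced_map h A x = (h ^^ r) x"
      using induced_map_returnE[of x A n h] less.prems assms(2) by (metis less_one not_le)
    then have "induced_map h A x \<in> A"
      by simp
    moreover have "(h ^^ (n - r)) (induced_map h A x) = y"
      using r less.prems(2) by (metis funpow_add le_add_diff_inverse2 o_apply)
    ultimately obtain m where "(induced_map h A ^^ m) (induced_map h A x) = y"
      using less.IH[of "n - r"] r False by auto
    then show ?thesis
      by (metis funpow_Suc_right o_apply)
  qed
qed

lemma same_cycle_induced_map:
  assumes "x \<in> A" "y \<in> A"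
  shows "same_cycle (induced_map h A) x y \<longleftrightarrow> same_cycle h x y"
  unfolding same_cycle_def
  using funpow_induced_map_eq_funpow funpow_to_funpow_induced_map[OF assms] by metis

lemma same_cycle_cong:
  assumes "\<And>y. y \<in> A \<Longrightarrow> f y = g y" "\<And>y. y \<in> A \<Longrightarrow> g y \<in> A" "x \<in> A"
  shows "same_cycle f x y \<longleftrightarrow> same_cycle g x y"
proof -
  have "(f ^^ n) x = (g ^^ n) x \<and> (g ^^ n) x \<in> A" for n
    by (induction n) (use assms in auto)
  then show ?thesis
    unfolding same_cycle_def by simp
qed

lemma induced_map_inv_cancel:
  assumes "permutation h" "x \<in> A"
  shows "induced_map (inv h) A (induced_map h A x) = x"
proof -
  obtain r where r: "r \<ge> 1" "(h ^^ r) x \<in> A" "\<And>j. 0 < j \<Longrightarrow> j < r \<Longrightarrow> (h ^^ j) x \<notin> A"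
    "induced_map h A x = (h ^^ r) x"
    using permutation_induced_map_returnE[OF assms] by metis
  have backwards: "(inv h ^^ j) ((h ^^ r) x) = (h ^^ (r - j)) x" if "j \<le> r" for j
  proof -
    have "(h ^^ r) x = (h ^^ j) ((h ^^ (r - j)) x)"
      using that by (metis funpow_add le_add_diff_inverse o_apply)
    then show ?thesis
      using inv_fn_o_fn_is_id[OF permutation_bijective[OF assms(1)], of j] by (metis o_apply)
  qed
  have "induced_map (inv h) A ((h ^^ r) x) = (inv h ^^ r) ((h ^^ r) x)"
    by (rule induced_map_eqI) (use r backwards assms(2) in auto)
  with r(4) backwards[of r] show ?thesis
    by simp
qed

lemma induced_map_inv:
  assumes "permutation h"
  shows "inv (induced_map h A) = induced_map (inv h) A"
proof (rule inv_unique_comp)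
  have inv_perm: "permutation (inv h)" and inv_inv: "inv (inv h) = h"
    using assms by (simp_all add: permutation_inverse inv_inv_eq permutation_bijective)
  show "induced_map h A \<circ> induced_map (inv h) A = id"
  proof
    fix x
    show "(induced_map h A \<circ> induced_map (inv h) A) x = id x"
      using induced_map_inv_cancel[OF inv_perm, of x A] induced_map_in[OF inv_perm, of x A]
      unfolding inv_inv by (cases "x \<in> A") simp_all
  qed
  show "induced_map (inv h) A \<circ> induced_map h A = id"
  proof
    fix x
    show "(induced_map (inv h) A \<circ> induced_map h A) x = id x"
      using induced_map_inv_cancel[OF assms, of x A] induced_map_in[OF assms, of x A]
      by (cases "x \<in> A") simp_all
  qed
qed

lemma induced_map_conj:
  assumes "permutation g" "bij c" "\<And>x. x \<in> A \<Longrightarrow> c x = x"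
  shows "induced_map (c \<circ> g \<circ> inv c) A = induced_map g A"
proof
  fix x
  show "induced_map (c \<circ> g \<circ> inv c) A x = induced_map g A x"
  proof (cases "x \<in> A")
    case True
    have c_in_iff: "c y \<in> A \<longleftrightarrow> y \<in> A" for y
      using assms(2,3) by (metis bij_is_inj injD)
    have iterate: "((c \<circ> g \<circ> inv c) ^^ n) x = c ((g ^^ n) x)" for n
      by (induction n) (use True assms(2,3) in \<open>simp_all add: bij_is_inj\<close>)
    obtain r where r: "r \<ge> 1" "(g ^^ r) x \<in> A" "\<And>j. 0 < j \<Longrightarrow> j < r \<Longrightarrow> (g ^^ j) x \<notin> A"
      "induced_map g A x = (g ^^ r) x"
      using permutation_induced_map_returnE[OF assms(1) True] by metis
    have "induced_map (c \<circ> g \<circ> inv c) A x = ((c \<circ> g \<circ> inv c) ^^ r) x"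
      by (rule induced_map_eqI) (use True r iterate c_in_iff in auto)
    with r iterate assms(3) show ?thesis
      by simp
  qed simp
qed

lemma induced_map_comp_left:
  assumes "permutation h" "\<And>x. x \<notin> A \<Longrightarrow> \<phi> x = x" "\<And>x. x \<in> A \<Longrightarrow> \<phi> x \<in> A"
  shows "induced_map (\<phi> \<circ> h) A = \<phi> \<circ> induced_map h A"
proof
  fix x
  show "induced_map (\<phi> \<circ> h) A x = (\<phi> \<circ> induced_map h A) x"
  proof (cases "x \<in> A")
    case True
    obtain r where r: "r \<ge> 1" "(h ^^ r) x \<in> A" "\<And>j. 0 < j \<Longrightarrow> j < r \<Longrightarrow> (h ^^ j) x \<notin> A"
      "induced_map h A x = (h ^^ r) x"
      using permutation_induced_map_returnE[OF assms(1) True] by metis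
    have before_return: "((\<phi> \<circ> h) ^^ j) x = (h ^^ j) x" if "j < r" for j
      using that
    proof (induction j)
      case (Suc j)
      then show ?case
        using assms(2)[OF r(3)[of "Suc j"]] by simp
    qed simp
    obtain q where q: "r = Suc q"
      using r(1) by (cases r) auto
    then have at_return: "((\<phi> \<circ> h) ^^ r) x = \<phi> ((h ^^ r) x)"
      using before_return[of q] by simp
    have "induced_map (\<phi> \<circ> h) A x = ((\<phi> \<circ> h) ^^ r) x"
      by (rule induced_map_eqI) (use True r before_return at_return assms(3) in auto)
    with at_return r(4) show ?thesis
      by simp
  qed (simp add: assms(2))
qed

(* The orbit of x under induced_map h A is the subsequence of its h-orbit lying in A. *)
lemma induced_map_reaches_first_hit:
  assumes "x \<in> A" "t \<ge> 1" "(h ^^ t) x \<in> A \<inter> B" "\<And>j. 0 < j \<Longrightarrow> j < t \<Longrightarrow> (h ^^ j) x \<notin> A \<inter> B"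
  shows "\<exists>m\<ge>1. (induced_map h A ^^ m) x = (h ^^ t) x
    \<and> (\<forall>i. 0 < i \<longrightarrow> i < m \<longrightarrow> (induced_map h A ^^ i) x \<notin> B)"
  using assms
proof (induction t arbitrary: x rule: less_induct)
  case (less t)
  have "(h ^^ t) x \<in> A"
    using less.prems(3) by blast
  then obtain r where r: "r \<ge> 1" "r \<le> t" "(h ^^ r) x \<in> A"
    "\<And>j. 0 < j \<Longrightarrow> j < r \<Longrightarrow> (h ^^ j) x \<notin> A" "induced_map h A x = (h ^^ r) x"
    using induced_map_returnE[OF less.prems(1,2)] by metis
  show ?case
  proof (cases "r = t")
    case True
    with r show ?thesis
      by (intro exI[of _ 1]) auto
  next
    case False
    let ?y = "induced_map h A x"
    have y_notin: "?y \<notin> B"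
      using less.prems(4)[of r] r False by auto
    have shift: "(h ^^ j) ?y = (h ^^ (j + r)) x" for j
      using r(5) by (simp add: funpow_add)
    have "\<exists>m\<ge>1. (induced_map h A ^^ m) ?y = (h ^^ (t - r)) ?y
      \<and> (\<forall>i. 0 < i \<longrightarrow> i < m \<longrightarrow> (induced_map h A ^^ i) ?y \<notin> B)"
    proof (rule less.IH)
      show "(h ^^ (t - r)) ?y \<in> A \<inter> B"
        using shift[of "t - r"] r(2) less.prems(3) by simp
      show "(h ^^ j) ?y \<notin> A \<inter> B" if "0 < j" "j < t - r" for j
        using shift[of j] less.prems(4)[of "j + r"] that by simp
    qed (use r False in auto)
    then obtain m where m: "m \<ge> 1" "(induced_map h A ^^ m) ?y = (h ^^ (t - r)) ?y"
      "\<And>i. 0 < i \<Longrightarrow> i < m \<Longrightarrow> (induced_map h A ^^ i) ?y \<notin> B"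
      by blast
    have step: "(induced_map h A ^^ Suc i) x = (induced_map h A ^^ i) ?y" for i
      by (simp only: funpow_Suc_right o_apply)
    have "(induced_map h A ^^ Suc m) x = (h ^^ t) x"
      using step[of m] m(2) shift[of "t - r"] r(2) by simp
    moreover have "(induced_map h A ^^ Suc i) x \<notin> B" if "i < m" for i
      using step[of i] m(3)[of i] y_notin that by (cases "i = 0") simp_all
    ultimately show ?thesis
      by (intro exI[of _ "Suc m"]) (auto simp: gr0_conv_Suc)
  qed
qed

lemma induced_map_induced_map:
  assumes "permutation h"
  shows "induced_map (induced_map h A) B = induced_map h (A \<inter> B)"
proof
  fix x
  consider "x \<notin> B" | "x \<in> B - A" | "x \<in> A \<inter> B"
    by blast
  then show "induced_map (induced_map h A) B x = induced_map h (A \<inter> B) x"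
  proof cases
    case 2
    then have "induced_map (induced_map h A) B x = (induced_map h A ^^ 1) x"
      by (intro induced_map_eqI) auto
    with 2 show ?thesis
      by simp
  next
    case 3
    obtain t where t: "t \<ge> 1" "(h ^^ t) x \<in> A \<inter> B" "\<And>j. 0 < j \<Longrightarrow> j < t \<Longrightarrow> (h ^^ j) x \<notin> A \<inter> B"
      "induced_map h (A \<inter> B) x = (h ^^ t) x"
      using permutation_induced_map_returnE[OF assms 3] by metis
    obtain m where m: "m \<ge> 1" "(induced_map h A ^^ m) x = (h ^^ t) x"
      "\<And>i. 0 < i \<Longrightarrow> i < m \<Longrightarrow> (induced_map h A ^^ i) x \<notin> B"
      using induced_map_reaches_first_hit[of x A t h B] 3 t by blast
    have "induced_map (induced_map h A) B x = (induced_map h A ^^ m) x"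
      by (rule induced_map_eqI) (use 3 m t in auto)
    with m t show ?thesis
      by simp
  qed simp
qed

lemma supp_inv: "bij \<tau> \<Longrightarrow> supp (inv \<tau>) = supp \<tau>"
  unfolding supp_def by (metis bij_inv_eq_iff)

lemma apply_in_supp_iff: "inj \<tau> \<Longrightarrow> \<tau> x \<in> supp \<tau> \<longleftrightarrow> x \<in> supp \<tau>"
  unfolding supp_def by (simp add: inj_eq)

lemma disjoint_supp_fixes: "supp \<tau> \<inter> supp \<tau>' = {} \<Longrightarrow> x \<in> supp \<tau> \<Longrightarrow> \<tau>' x = x"
  unfolding supp_def by blast

lemma disjoint_supp_apply_notin:
  assumes "inj \<tau>'" "supp \<tau> \<inter> supp \<tau>' = {}" "x \<notin> supp \<tau>"
  shows "\<tau>' x \<notin> supp \<tau>"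
  using assms apply_in_supp_iff[OF assms(1), of x] unfolding supp_def by auto

lemma comp_disjoint_supp_apply:
  assumes "inj \<tau>'" "supp \<tau> \<inter> supp \<tau>' = {}"
  shows "(\<tau> \<circ> \<tau>') x = (if x \<in> supp \<tau> then \<tau> x else \<tau>' x)"
  using disjoint_supp_fixes[OF assms(2), of x] disjoint_supp_apply_notin[OF assms, of x]
  by (auto simp: supp_def)

lemma disjoint_supp_comp_commute:
  assumes "inj \<tau>" "inj \<tau>'" "supp \<tau> \<inter> supp \<tau>' = {}"
  shows "\<tau> \<circ> \<tau>' = \<tau>' \<circ> \<tau>"
proof
  fix x
  have "supp \<tau>' \<inter> supp \<tau> = {}"
    using assms(3) by blast
  then have "(\<tau>' \<circ> \<tau>) x = (if x \<in> supp \<tau>' then \<tau>' x else \<tau> x)"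
    by (rule comp_disjoint_supp_apply[OF assms(1)])
  moreover have "(\<tau> \<circ> \<tau>') x = (if x \<in> supp \<tau> then \<tau> x else \<tau>' x)"
    by (rule comp_disjoint_supp_apply[OF assms(2,3)])
  ultimately show "(\<tau> \<circ> \<tau>') x = (\<tau>' \<circ> \<tau>) x"
    using assms(3) by (auto simp: supp_def)
qed

lemma supp_comp_disjoint:
  assumes "inj \<tau>'" "supp \<tau> \<inter> supp \<tau>' = {}"
  shows "supp (\<tau> \<circ> \<tau>') = supp \<tau> \<union> supp \<tau>'"
  using comp_disjoint_supp_apply[OF assms] unfolding supp_def by auto

lemma perm_minus_eq_induced_map: "perm_minus \<sigma> \<tau> = induced_map (\<tau> \<circ> \<sigma>) (- supp \<tau>)"
  by (simp add: fun_eq_iff perm_minus_def induced_map_def)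

lemma inv_perm_minus:
  assumes "permutation \<sigma>" "permutation \<tau>"
  shows "inv (perm_minus \<sigma> \<tau>) = perm_minus (inv \<sigma>) (inv \<tau>)"
proof -
  have bij: "bij \<sigma>" "bij \<tau>"
    using assms by (simp_all add: permutation_bijective)
  have inv_fixes: "inv \<tau> x = x" if "x \<in> - supp \<tau>" for x
    using that bij by (simp add: supp_def inv_f_eq bij_is_inj)
  \<comment> \<open>\<open>inv (\<tau> \<circ> \<sigma>)\<close> and \<open>inv \<tau> \<circ> inv \<sigma>\<close> are conjugate by \<open>inv \<tau>\<close>, which fixes \<open>- supp \<tau>\<close>.\<close>
  have "inv \<tau> \<circ> inv \<sigma> = inv \<tau> \<circ> (inv \<sigma> \<circ> inv \<tau>) \<circ> inv (inv \<tau>)"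
    using bij by (simp add: inv_inv_eq fun_eq_iff inv_f_f bij_is_inj)
  then have "perm_minus (inv \<sigma>) (inv \<tau>)
      = induced_map (inv \<tau> \<circ> (inv \<sigma> \<circ> inv \<tau>) \<circ> inv (inv \<tau>)) (- supp \<tau>)"
    using bij by (simp add: perm_minus_eq_induced_map supp_inv)
  also have "\<dots> = induced_map (inv \<sigma> \<circ> inv \<tau>) (- supp \<tau>)"
    using assms bij inv_fixes
    by (intro induced_map_conj) (simp_all add: permutation_compose permutation_inverse bij_imp_bij_inv)
  also have "\<dots> = inv (perm_minus \<sigma> \<tau>)"
    using induced_map_inv[of "\<tau> \<circ> \<sigma>"] assms bij
    by (simp add: perm_minus_eq_induced_map permutation_compose o_inv_distrib)
  finally show ?thesis
    by (rule sym)
qed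

lemma perm_minus_perm_minus:
  assumes "permutation \<sigma>" "permutation \<tau>" "permutation \<tau>'" "supp \<tau> \<inter> supp \<tau>' = {}"
  shows "perm_minus (perm_minus \<sigma> \<tau>) \<tau>' = perm_minus \<sigma> (\<tau> \<circ> \<tau>')"
proof -
  have inj: "inj \<tau>" "inj \<tau>'"
    using assms by (simp_all add: permutation_bijective bij_is_inj)
  have "perm_minus (perm_minus \<sigma> \<tau>) \<tau>' = induced_map (\<tau>' \<circ> induced_map (\<tau> \<circ> \<sigma>) (- supp \<tau>)) (- supp \<tau>')"
    by (simp add: perm_minus_eq_induced_map)
  also have "\<tau>' \<circ> induced_map (\<tau> \<circ> \<sigma>) (- supp \<tau>) = induced_map (\<tau>' \<circ> \<tau> \<circ> \<sigma>) (- supp \<tau>)"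
    using induced_map_comp_left[of "\<tau> \<circ> \<sigma>" "- supp \<tau>" \<tau>'] assms inj
      disjoint_supp_fixes[OF assms(4)] disjoint_supp_apply_notin[OF inj(2) assms(4)]
    by (simp add: permutation_compose o_assoc)
  also have "induced_map (induced_map (\<tau>' \<circ> \<tau> \<circ> \<sigma>) (- supp \<tau>)) (- supp \<tau>')
      = induced_map (\<tau>' \<circ> \<tau> \<circ> \<sigma>) (- supp \<tau> \<inter> - supp \<tau>')"
    using assms by (simp add: induced_map_induced_map permutation_compose)
  also have "\<dots> = perm_minus \<sigma> (\<tau> \<circ> \<tau>')"
    using disjoint_supp_comp_commute[OF inj assms(4)] supp_comp_disjoint[OF inj(2) assms(4)]
    by (simp add: perm_minus_eq_induced_map)
  finally show ?thesis .
qed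

lemma bowtie_simps [simp]:
  "bowtie \<pi> \<sigma> (True, k) = (False, \<pi> k)"
  "bowtie \<pi> \<sigma> (False, k) = (True, \<sigma> k)"
  by (simp_all add: bowtie_def)

lemma funpow_bowtie_while_in_supp:
  assumes "supp \<tau> \<inter> supp \<tau>' = {}" "\<And>j. 0 < j \<Longrightarrow> j \<le> n \<Longrightarrow> ((\<tau> \<circ> \<sigma>) ^^ j) k \<in> supp \<tau>"
  shows "(bowtie (\<tau>' \<circ> \<tau>) \<sigma> ^^ (2 * n)) (False, k) = (False, ((\<tau> \<circ> \<sigma>) ^^ n) k)"
  using assms(2)
proof (induction n)
  case (Suc n)
  let ?F = "bowtie (\<tau>' \<circ> \<tau>) \<sigma>" and ?h = "\<tau> \<circ> \<sigma>"
  have fixed: "\<tau>' ((?h ^^ Suc n) k) = (?h ^^ Suc n) k"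
    by (intro disjoint_supp_fixes[OF assms(1)] Suc.prems) auto
  have IH: "(?F ^^ (2 * n)) (False, k) = (False, (?h ^^ n) k)"
    by (rule Suc.IH, rule Suc.prems) simp_all
  have "(?F ^^ (2 * Suc n)) (False, k) = ?F (?F ((?F ^^ (2 * n)) (False, k)))"
    by simp
  also have "\<dots> = ?F (?F (False, (?h ^^ n) k))"
    by (simp only: IH)
  also have "\<dots> = (False, \<tau>' ((?h ^^ Suc n) k))"
    by simp
  also have "\<dots> = (False, (?h ^^ Suc n) k)"
    by (simp only: fixed)
  finally show ?case .
qed simp

lemma induced_map_bowtie_False:
  assumes "permutation \<sigma>" "permutation \<tau>" "supp \<tau> \<inter> supp \<tau>' = {}" "k \<notin> supp \<tau>"
  shows "induced_map (bowtie (\<tau>' \<circ> \<tau>) \<sigma>) {p. snd p \<notin> supp \<tau>} (False, k) = (True, perm_minus \<sigma> \<tau> k)"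
proof -
  let ?F = "bowtie (\<tau>' \<circ> \<tau>) \<sigma>" and ?B = "{p. snd p \<notin> supp \<tau>}" and ?h = "\<tau> \<circ> \<sigma>"
  obtain r where r: "r \<ge> 1" "(?h ^^ r) k \<notin> supp \<tau>"
    "\<And>j. 0 < j \<Longrightarrow> j < r \<Longrightarrow> (?h ^^ j) k \<in> supp \<tau>" "perm_minus \<sigma> \<tau> k = (?h ^^ r) k"
    using permutation_induced_map_returnE[of ?h k "- supp \<tau>"] assms
    by (auto simp: perm_minus_eq_induced_map permutation_compose)
  obtain q where q: "r = Suc q"
    using r(1) by (cases r) auto
  have odd: "(?F ^^ Suc (2 * j)) (False, k) = (True, \<sigma> ((?h ^^ j) k))" if "j < r" for j
    using funpow_bowtie_while_in_supp[OF assms(3), of j \<sigma> k] r(3) that by simp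
  have \<sigma>_in_supp_iff: "\<sigma> ((?h ^^ j) k) \<in> supp \<tau> \<longleftrightarrow> (?h ^^ Suc j) k \<in> supp \<tau>" for j
    using apply_in_supp_iff[of \<tau>] assms(2) by (simp add: permutation_bijective bij_is_inj)
  have "\<sigma> ((?h ^^ q) k) \<notin> supp \<tau>"
    using \<sigma>_in_supp_iff[of q] r(2) q by simp
  then have last: "\<sigma> ((?h ^^ q) k) = (?h ^^ r) k"
    using q by (simp add: supp_def)
  have q_less: "q < r"
    using q by simp
  \<comment> \<open>The odd iterate \<open>(True, \<sigma> (((\<tau> \<circ> \<sigma>) ^^ j) k))\<close> lies in \<open>?B\<close> iff \<open>(\<tau> \<circ> \<sigma>) ^^ Suc j\<close> left \<open>supp \<tau>\<close>.\<close>
  have "induced_map ?F ?B (False, k) = (?F ^^ Suc (2 * q)) (False, k)"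
  proof (rule induced_map_eqI)
    show "(False, k) \<in> ?B" "(?F ^^ Suc (2 * q)) (False, k) \<in> ?B"
      using assms(4) odd[OF q_less] last r(2) by simp_all
    show "(?F ^^ j) (False, k) \<notin> ?B" if "0 < j" "j < Suc (2 * q)" for j
    proof (cases "even j")
      case True
      then obtain l where l: "j = 2 * l"
        by blast
      then have "0 < l" "l < r"
        using that q by simp_all
      with l show ?thesis
        using r(3) funpow_bowtie_while_in_supp[OF assms(3), of l \<sigma> k] by simp
    next
      case False
      then obtain l where l: "j = Suc (2 * l)"
        by (metis oddE Suc_eq_plus1)
      then have "Suc l < r"
        using that q by simp
      with l show ?thesis
        using r(3)[of "Suc l"] odd[of l] \<sigma>_in_supp_iff[of l] by simp
    qed
  qed simp
  with odd[OF q_less] last r(4) show ?thesis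
    by simp
qed

lemma induced_map_bowtie:
  assumes "permutation \<sigma>" "permutation \<tau>" "inj \<tau>'" "supp \<tau> \<inter> supp \<tau>' = {}" "k \<notin> supp \<tau>"
  shows "induced_map (bowtie (\<tau>' \<circ> \<tau>) \<sigma>) {p. snd p \<notin> supp \<tau>} (i, k) = bowtie \<tau>' (perm_minus \<sigma> \<tau>) (i, k)"
proof (cases i)
  case True
  have "\<tau> k = k"
    using assms(5) by (simp add: supp_def)
  then have "induced_map (bowtie (\<tau>' \<circ> \<tau>) \<sigma>) {p. snd p \<notin> supp \<tau>} (True, k)
      = (bowtie (\<tau>' \<circ> \<tau>) \<sigma> ^^ 1) (True, k)"
    by (intro induced_map_eqI) (use assms(5) disjoint_supp_apply_notin[OF assms(3,4,5)] in auto)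
  with True \<open>\<tau> k = k\<close> show ?thesis
    by simp
next
  case False
  with induced_map_bowtie_False[OF assms(1,2,4,5)] show ?thesis
    by simp
qed

lemma same_cycle_bowtie_perm_minus:
  assumes "permutation \<sigma>" "permutation \<tau>" "inj \<tau>'" "supp \<tau> \<inter> supp \<tau>' = {}"
    and "k \<notin> supp \<tau>" "k' \<notin> supp \<tau>"
  shows "same_cycle (bowtie (\<tau>' \<circ> \<tau>) \<sigma>) (i, k) (i', k')
    \<longleftrightarrow> same_cycle (bowtie \<tau>' (perm_minus \<sigma> \<tau>)) (i, k) (i', k')"
proof -
  let ?F = "bowtie (\<tau>' \<circ> \<tau>) \<sigma>" and ?G = "bowtie \<tau>' (perm_minus \<sigma> \<tau>)"
    and ?B = "{p. snd p \<notin> supp \<tau>}"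
  have G_in: "?G p \<in> ?B" if "p \<in> ?B" for p
  proof (cases p)
    case (Pair j l)
    have "perm_minus \<sigma> \<tau> l \<notin> supp \<tau>"
      using induced_map_in[of "\<tau> \<circ> \<sigma>" l "- supp \<tau>"] that Pair assms(1,2)
      by (simp add: perm_minus_eq_induced_map permutation_compose)
    with Pair that disjoint_supp_apply_notin[OF assms(3,4)] show ?thesis
      by (cases j) auto
  qed
  have "same_cycle ?F (i, k) (i', k') \<longleftrightarrow> same_cycle (induced_map ?F ?B) (i, k) (i', k')"
    using same_cycle_induced_map[of "(i, k)" ?B "(i', k')" ?F] assms(5,6) by simp
  also have "\<dots> \<longleftrightarrow> same_cycle ?G (i, k) (i', k')"
    using induced_map_bowtie[OF assms(1-4)] G_in assms(5)
    by (intro same_cycle_cong[of ?B]) auto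
  finally show ?thesis .
qed

theorem lemma3p16:
  fixes S :: "'a set" and \<sigma> \<tau> \<tau>' :: "'a \<Rightarrow> 'a"
  assumes "finite S"
    and "\<sigma> permutes S" and "\<tau> permutes S" and "\<tau>' permutes S"
    and "supp \<tau> \<inter> supp \<tau>' = {}"
  shows "inv (perm_minus \<sigma> \<tau>) = perm_minus (inv \<sigma>) (inv \<tau>)
    \<and> (perm_minus (perm_minus \<sigma> \<tau>) \<tau>' = perm_minus \<sigma> (\<tau> \<circ> \<tau>')
       \<and> perm_minus \<sigma> (\<tau> \<circ> \<tau>') = perm_minus (perm_minus \<sigma> \<tau>') \<tau>)
    \<and> (\<forall>i k i' k'. k \<in> S - supp \<tau> \<longrightarrow> k' \<in> S - supp \<tau> \<longrightarrow>
           (same_cycle (bowtie (\<tau>' \<circ> \<tau>) \<sigma>) (i, k) (i', k')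
            \<longleftrightarrow> same_cycle (bowtie \<tau>' (perm_minus \<sigma> \<tau>)) (i, k) (i', k')))"
proof -
  have perm: "permutation \<sigma>" "permutation \<tau>" "permutation \<tau>'"
    using assms(1-4) permutation_permutes by blast+
  have inj: "inj \<tau>" "inj \<tau>'"
    using assms(3,4) permutes_inj by blast+
  have disjoint': "supp \<tau>' \<inter> supp \<tau> = {}"
    using assms(5) by blast
  have "perm_minus \<sigma> (\<tau> \<circ> \<tau>') = perm_minus (perm_minus \<sigma> \<tau>') \<tau>"
    using perm_minus_perm_minus[OF perm(1,3,2) disjoint'] disjoint_supp_comp_commute[OF inj assms(5)]
    by simp
  then show ?thesis
    using inv_perm_minus[OF perm(1,2)] perm_minus_perm_minus[OF perm assms(5)]
      same_cycle_bowtie_perm_minus[OF perm(1,2) inj(2) assms(5)]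
    by blast
qed

end
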